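(* Let ${\cal G}$ be a graph as described in the context and let $f$ be an edgewise linear function on ${\cal G}$. Then for every $p\ge 1$, $$\|f\|_{p,{\cal E}}\le \rho_{\sup}^{1/p}\,\|f\|_{p,{\cal V}}.$$
   Context: A graph ${\cal G}$ consists of an undirected graph $(V,E)$ (possibly infinite; multiple edges and self-loops allowed), a length $\ell_e>0$ for each edge $e$, a specified subset $\partial{\cal G}\subseteq V$ of boundary vertices, a vertex measure ${\cal V}$ (a measure supported on $V$ with ${\cal V}(v)>0$ for every $v$), and an edge measure ${\cal E}$ (zero on vertices, and on the interior of each edge $e$ equal to $a_e>0$ times Lebesgue measure). ${\cal G}$ is identified with its geometric realization (a closed interval of length $\ell_e$ attached between the endpoints of each edge $e$). A function is edgewise linear if it is continuous on ${\cal G}$ and linear on each edge interval. $\|f\|_{p,\mu}=(\int_{\cal G}|f|^p\,d\mu)^{1/p}$. The half-degree of $v$ is $\rho(v)={\cal V}(v)^{-1}\sum_{e\ni v}{\cal E}(e)/2$, and $\rho_{\sup}=\sup_{v\in V}\rho(v)$. *)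

theory Defs
  imports "HOL-Analysis.Analysis"
begin

text \<open>A metric graph: vertices of type 'v, edges of type 'e (possibly infinite),
  ends e = (u, w) are the endpoints of e (u = w allowed: self-loop; multiple edges allowed),
  len e > 0 is the length, a e > 0 is the density of the edge measure on e,
  Vm v > 0 is the vertex measure of v. Edge e is realised as the interval [0, len e],
  with 0 identified with fst (ends e) and len e with snd (ends e).\<close>

definition metric_graph ::
  "('e \<Rightarrow> 'v \<times> 'v) \<Rightarrow> ('e \<Rightarrow> real) \<Rightarrow> ('e \<Rightarrow> real) \<Rightarrow> ('v \<Rightarrow> real) \<Rightarrow> bool" where
  "metric_graph ends len a Vm \<longleftrightarrow>
     (\<forall>e. len e > 0) \<and> (\<forall>e. a e > 0) \<and> (\<forall>v. Vm v > 0)"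

text \<open>A function on the geometric realisation is given by its values fv on vertices and
  fe e t at the point of edge e at distance t from fst (ends e), 0 \<le> t \<le> len e.\<close>

definition edgewise_linear ::
  "('e \<Rightarrow> 'v \<times> 'v) \<Rightarrow> ('e \<Rightarrow> real) \<Rightarrow> ('v \<Rightarrow> real) \<Rightarrow> ('e \<Rightarrow> real \<Rightarrow> real) \<Rightarrow> bool" where
  "edgewise_linear ends len fv fe \<longleftrightarrow>
     (\<forall>e. (\<exists>c d. \<forall>t\<in>{0..len e}. fe e t = c + d * t)
          \<and> fe e 0 = fv (fst (ends e)) \<and> fe e (len e) = fv (snd (ends e)))"

definition edge_mass :: "('e \<Rightarrow> real) \<Rightarrow> ('e \<Rightarrow> real) \<Rightarrow> 'e \<Rightarrow> real" where
  "edge_mass len a e = a e * len e"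

text \<open>Half-degree: rho v = Vm(v)^{-1} * sum over edges e incident to v of E(e)/2,
  where a self-loop at v is incident to v twice (once per endpoint).\<close>
definition half_degree ::
  "('e \<Rightarrow> 'v \<times> 'v) \<Rightarrow> ('e \<Rightarrow> real) \<Rightarrow> ('e \<Rightarrow> real) \<Rightarrow> ('v \<Rightarrow> real) \<Rightarrow> 'v \<Rightarrow> ennreal" where
  "half_degree ends len a Vm v =
     ((\<integral>\<^sup>+ e. (if fst (ends e) = v then ennreal (edge_mass len a e / 2) else 0) \<partial>count_space UNIV)
    + (\<integral>\<^sup>+ e. (if snd (ends e) = v then ennreal (edge_mass len a e / 2) else 0) \<partial>count_space UNIV))
     / ennreal (Vm v)"

definition rho_sup ::
  "('e \<Rightarrow> 'v \<times> 'v) \<Rightarrow> ('e \<Rightarrow> real) \<Rightarrow> ('e \<Rightarrow> real) \<Rightarrow> ('v \<Rightarrow> real) \<Rightarrow> ennreal" where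
  "rho_sup ends len a Vm = (SUP v. half_degree ends len a Vm v)"

definition enn_root :: "real \<Rightarrow> ennreal \<Rightarrow> ennreal" where
  "enn_root p x = (if x = \<infinity> then \<infinity> else ennreal (enn2real x powr (1 / p)))"

definition norm_V :: "('v \<Rightarrow> real) \<Rightarrow> real \<Rightarrow> ('v \<Rightarrow> real) \<Rightarrow> ennreal" where
  "norm_V Vm p fv = enn_root p (\<integral>\<^sup>+ v. ennreal (Vm v * \<bar>fv v\<bar> powr p) \<partial>count_space UNIV)"

definition norm_E ::
  "('e \<Rightarrow> real) \<Rightarrow> ('e \<Rightarrow> real) \<Rightarrow> real \<Rightarrow> ('e \<Rightarrow> real \<Rightarrow> real) \<Rightarrow> ennreal" where
  "norm_E len a p fe = enn_root p
     (\<integral>\<^sup>+ e. ennreal (a e) * (\<integral>\<^sup>+ t\<in>{0<..<len e}. ennreal (\<bar>fe e t\<bar> powr p) \<partial>lborel)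
       \<partial>count_space UNIV)"

end

theory Submission
  imports Defs
begin

(* Along an edge f is affine, so by convexity of |x| powr p the function |f| powr p lies below
   the chord through its endpoint values; integrating gives the trapezoid bound
   int_e |f|^p <= len e / 2 * (|f u|^p + |f w|^p).  Weighting by a e, each endpoint of e is charged
   the mass E(e)/2, and regrouping the sum over edges as a sum over vertices (Tonelli for counting
   measures) yields sum_v rho(v) V(v) |f v|^p <= rho_sup * ||f||_{p,V}^p.  Taking p-th roots
   finishes the proof. *)

lemma convex_on_powr_nonneg:
  assumes "p \<ge> 1"
  shows "convex_on {0..} (\<lambda>x::real. x powr p)"
proof (rule convex_on_linorderI)
  fix t x y :: real
  assume t: "0 < t" "t < 1" and xy: "x \<in> {0..}" "y \<in> {0..}" "x < y"
  show "((1 - t) *\<^sub>R x + t *\<^sub>R y) powr p \<le> (1 - t) * x powr p + t * y powr p"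
  proof (cases "x = 0")
    case True
    have "t powr p \<le> t powr 1"
      using t assms by (intro powr_mono') auto
    then have "(t * y) powr p \<le> t * y powr p"
      using t xy by (simp add: powr_mult mult_right_mono)
    then show ?thesis using True by simp
  next
    case False
    then show ?thesis
      using convex_onD[OF powr_convex[OF assms], of t x y] t xy by simp
  qed
qed simp

lemma convex_on_abs_powr:
  assumes "p \<ge> 1"
  shows "convex_on UNIV (\<lambda>x::real. \<bar>x\<bar> powr p)"
proof (rule convex_onI)
  fix t x y :: real
  assume t: "0 < t" "t < 1"
  have "\<bar>(1 - t) *\<^sub>R x + t *\<^sub>R y\<bar> \<le> (1 - t) * \<bar>x\<bar> + t * \<bar>y\<bar>"
    using t by (simp add: abs_mult order_trans[OF abs_triangle_ineq])
  then have "\<bar>(1 - t) *\<^sub>R x + t *\<^sub>R y\<bar> powr p \<le> ((1 - t) *\<^sub>R \<bar>x\<bar> + t *\<^sub>R \<bar>y\<bar>) powr p"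
    using assms by (intro powr_mono2) auto
  also have "\<dots> \<le> (1 - t) * \<bar>x\<bar> powr p + t * \<bar>y\<bar> powr p"
    using convex_onD[OF convex_on_powr_nonneg[OF assms], of t "\<bar>x\<bar>" "\<bar>y\<bar>"] t by simp
  finally show "\<bar>(1 - t) *\<^sub>R x + t *\<^sub>R y\<bar> powr p \<le> (1 - t) * \<bar>x\<bar> powr p + t * \<bar>y\<bar> powr p" .
qed simp

lemma nn_integral_convex_affine_le_trapezoid:
  fixes \<phi> h :: "real \<Rightarrow> real"
  assumes \<phi>: "convex_on UNIV \<phi>" "\<And>x. \<phi> x \<ge> 0"
    and L: "L \<ge> 0" and h: "\<And>t. t \<in> {0..L} \<Longrightarrow> h t = c + d * t"
  shows "(\<integral>\<^sup>+t\<in>{0<..<L}. ennreal (\<phi> (h t)) \<partial>lborel) \<le> ennreal (L / 2 * (\<phi> (h 0) + \<phi> (h L)))"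
proof -
  define q where "q t = \<phi> (h 0) + (\<phi> (h L) - \<phi> (h 0)) / L * t" for t
  have below_chord: "\<phi> (h t) \<le> q t" if t: "t \<in> {0..L}" for t
  proof -
    have "h t = (1 - t / L) *\<^sub>R h 0 + (t / L) *\<^sub>R h L"
      using h t L h[of 0] h[of L] by (cases "L = 0") (auto simp: field_simps)
    also have "\<phi> \<dots> \<le> (1 - t / L) * \<phi> (h 0) + (t / L) * \<phi> (h L)"
      using t L by (intro convex_onD[OF \<phi>(1)]) (auto simp: divide_le_eq_1)
    finally show ?thesis
      by (simp add: q_def algebra_simps diff_divide_distrib)
  qed
  have "(q has_integral L * \<phi> (h 0) + (\<phi> (h L) - \<phi> (h 0)) / L * (L\<^sup>2 / 2)) {0..L}"
    unfolding q_def using L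
    by (intro has_integral_add has_integral_mult_right)
       (auto intro: has_integral_const_real[THEN has_integral_eq_rhs] ident_has_integral[THEN has_integral_eq_rhs])
  also have "L * \<phi> (h 0) + (\<phi> (h L) - \<phi> (h 0)) / L * (L\<^sup>2 / 2) = L / 2 * (\<phi> (h 0) + \<phi> (h L))"
    by (cases "L = 0") (simp_all add: field_simps power2_eq_square)
  finally have q_int: "(q has_integral L / 2 * (\<phi> (h 0) + \<phi> (h L))) {0..L}" .
  have "(\<integral>\<^sup>+t\<in>{0<..<L}. ennreal (\<phi> (h t)) \<partial>lborel) \<le> (\<integral>\<^sup>+t. ennreal (indicator {0..L} t * q t) \<partial>lborel)"
    by (intro nn_integral_mono) (auto simp: indicator_def intro!: below_chord ennreal_leI)
  also have "\<dots> = ennreal (L / 2 * (\<phi> (h 0) + \<phi> (h L)))"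
    using below_chord \<phi>(2) order_trans by (intro nn_integral_has_integral_lebesgue[OF _ q_int]) blast
  finally show ?thesis .
qed

lemma nn_integral_count_space_swap:
  fixes f :: "'a \<Rightarrow> 'b \<Rightarrow> ennreal"
  shows "(\<integral>\<^sup>+x. \<integral>\<^sup>+y. f x y \<partial>count_space UNIV \<partial>count_space UNIV)
       = (\<integral>\<^sup>+y. \<integral>\<^sup>+x. f x y \<partial>count_space UNIV \<partial>count_space UNIV)"
  using nn_integral_fst_count_space[of "case_prod f"] nn_integral_snd_count_space[of "case_prod f"]
  by simp

lemma nn_integral_count_space_regroup:
  fixes k :: "'a \<Rightarrow> 'b" and c :: "'a \<Rightarrow> ennreal" and g :: "'b \<Rightarrow> ennreal"
  shows "(\<integral>\<^sup>+x. c x * g (k x) \<partial>count_space UNIV)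
       = (\<integral>\<^sup>+y. g y * (\<integral>\<^sup>+x. (if k x = y then c x else 0) \<partial>count_space UNIV) \<partial>count_space UNIV)"
proof -
  have "(\<integral>\<^sup>+x. c x * g (k x) \<partial>count_space UNIV)
      = (\<integral>\<^sup>+x. \<integral>\<^sup>+y. (if k x = y then c x * g y else 0) \<partial>count_space UNIV \<partial>count_space UNIV)"
    by (intro nn_integral_cong, subst nn_integral_count_space'[of "{k _}"]) auto
  also have "\<dots> = (\<integral>\<^sup>+y. \<integral>\<^sup>+x. g y * (if k x = y then c x else 0) \<partial>count_space UNIV \<partial>count_space UNIV)"
    by (subst nn_integral_count_space_swap) (intro nn_integral_cong, simp add: mult.commute)
  also have "\<dots> = (\<integral>\<^sup>+y. g y * (\<integral>\<^sup>+x. (if k x = y then c x else 0) \<partial>count_space UNIV) \<partial>count_space UNIV)"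
    by (simp add: nn_integral_cmult)
  finally show ?thesis .
qed

lemma enn_root_mono: "p > 0 \<Longrightarrow> x \<le> y \<Longrightarrow> enn_root p x \<le> enn_root p y"
  by (cases x rule: ennreal_cases; cases y rule: ennreal_cases)
     (auto simp: enn_root_def top_unique intro!: ennreal_leI powr_mono2)

lemma enn_root_mult: "p > 0 \<Longrightarrow> enn_root p (x * y) = enn_root p x * enn_root p y"
  by (cases x rule: ennreal_cases; cases y rule: ennreal_cases)
     (auto simp: enn_root_def ennreal_mult[symmetric] powr_mult ennreal_mult_top ennreal_top_mult)

lemma nn_integral_endpoint_masses_eq_half_degree:
  fixes ends :: "'e \<Rightarrow> 'v \<times> 'v" and len a :: "'e \<Rightarrow> real" and Vm :: "'v \<Rightarrow> real"
    and g :: "'v \<Rightarrow> ennreal"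
  assumes Vm: "\<And>v. Vm v > 0"
  shows "(\<integral>\<^sup>+e. ennreal (edge_mass len a e / 2) * (g (fst (ends e)) + g (snd (ends e))) \<partial>count_space UNIV)
       = (\<integral>\<^sup>+v. half_degree ends len a Vm v * ennreal (Vm v) * g v \<partial>count_space UNIV)"
proof -
  define c where "c e = ennreal (edge_mass len a e / 2)" for e
  define deg where "deg k v = (\<integral>\<^sup>+e. (if k e = v then c e else 0) \<partial>count_space UNIV)"
    for k :: "'e \<Rightarrow> 'v" and v
  have "(\<integral>\<^sup>+e. c e * (g (fst (ends e)) + g (snd (ends e))) \<partial>count_space UNIV)
      = (\<integral>\<^sup>+e. c e * g (fst (ends e)) \<partial>count_space UNIV) + (\<integral>\<^sup>+e. c e * g (snd (ends e)) \<partial>count_space UNIV)"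
    by (simp add: distrib_left nn_integral_add)
  also have "\<dots> = (\<integral>\<^sup>+v. g v * deg (\<lambda>e. fst (ends e)) v \<partial>count_space UNIV)
      + (\<integral>\<^sup>+v. g v * deg (\<lambda>e. snd (ends e)) v \<partial>count_space UNIV)"
    unfolding deg_def
    using nn_integral_count_space_regroup[of c g "\<lambda>e. fst (ends e)"]
      nn_integral_count_space_regroup[of c g "\<lambda>e. snd (ends e)"] by simp
  also have "\<dots> = (\<integral>\<^sup>+v. g v * (deg (\<lambda>e. fst (ends e)) v + deg (\<lambda>e. snd (ends e)) v) \<partial>count_space UNIV)"
    by (simp add: distrib_left nn_integral_add)
  also have "\<dots> = (\<integral>\<^sup>+v. half_degree ends len a Vm v * ennreal (Vm v) * g v \<partial>count_space UNIV)"
  proof (intro nn_integral_cong)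
    fix v
    have "half_degree ends len a Vm v * ennreal (Vm v) = deg (\<lambda>e. fst (ends e)) v + deg (\<lambda>e. snd (ends e)) v"
      unfolding half_degree_def deg_def c_def using Vm[of v] by (simp add: ennreal_divide_times divide_ennreal)
    then show "g v * (deg (\<lambda>e. fst (ends e)) v + deg (\<lambda>e. snd (ends e)) v) = half_degree ends len a Vm v * ennreal (Vm v) * g v"
      by (simp add: mult.commute)
  qed
  finally show ?thesis by (simp only: c_def)
qed

lemma edge_integral_le_endpoint_masses:
  assumes f: "edgewise_linear ends len fv fe" and p: "p \<ge> 1"
    and len: "len e \<ge> 0" and a: "a e \<ge> 0"
  shows "ennreal (a e) * (\<integral>\<^sup>+t\<in>{0<..<len e}. ennreal (\<bar>fe e t\<bar> powr p) \<partial>lborel)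
       \<le> ennreal (edge_mass len a e / 2)
           * (ennreal (\<bar>fv (fst (ends e))\<bar> powr p) + ennreal (\<bar>fv (snd (ends e))\<bar> powr p))"
proof -
  obtain c d where lin: "\<forall>t\<in>{0..len e}. fe e t = c + d * t"
    and ends: "fe e 0 = fv (fst (ends e))" "fe e (len e) = fv (snd (ends e))"
    using f unfolding edgewise_linear_def by blast
  define A B where "A = \<bar>fv (fst (ends e))\<bar> powr p" and "B = \<bar>fv (snd (ends e))\<bar> powr p"
  have "(\<integral>\<^sup>+t\<in>{0<..<len e}. ennreal (\<bar>fe e t\<bar> powr p) \<partial>lborel) \<le> ennreal (len e / 2 * (A + B))"
    using nn_integral_convex_affine_le_trapezoid[OF convex_on_abs_powr[OF p], of "len e" "fe e"]
      lin ends len by (simp add: A_def B_def)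
  then have "ennreal (a e) * (\<integral>\<^sup>+t\<in>{0<..<len e}. ennreal (\<bar>fe e t\<bar> powr p) \<partial>lborel)
      \<le> ennreal (a e) * ennreal (len e / 2 * (A + B))"
    by (rule mult_left_mono) simp
  also have "\<dots> = ennreal (edge_mass len a e / 2) * ennreal (A + B)"
    using a len by (simp add: A_def B_def edge_mass_def ennreal_mult[symmetric] mult_ac del: ennreal_plus)
  also have "\<dots> = ennreal (edge_mass len a e / 2) * (ennreal A + ennreal B)"
    by (simp add: A_def B_def)
  finally show ?thesis by (simp only: A_def B_def)
qed

lemma edge_integral_le_rho_sup_vertex_integral:
  fixes ends :: "'e \<Rightarrow> 'v \<times> 'v" and len a :: "'e \<Rightarrow> real" and Vm :: "'v \<Rightarrow> real"
    and fv :: "'v \<Rightarrow> real" and fe :: "'e \<Rightarrow> real \<Rightarrow> real" and p :: real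
  assumes G: "metric_graph ends len a Vm" and f: "edgewise_linear ends len fv fe" and p: "p \<ge> 1"
  shows "(\<integral>\<^sup>+e. ennreal (a e) * (\<integral>\<^sup>+t\<in>{0<..<len e}. ennreal (\<bar>fe e t\<bar> powr p) \<partial>lborel) \<partial>count_space UNIV)
       \<le> rho_sup ends len a Vm * (\<integral>\<^sup>+v. ennreal (Vm v * \<bar>fv v\<bar> powr p) \<partial>count_space UNIV)"
proof -
  define g where "g v = ennreal (\<bar>fv v\<bar> powr p)" for v
  have len: "len e > 0" and a: "a e > 0" and Vm: "Vm v > 0" for e v
    using G by (auto simp: metric_graph_def)
  have "(\<integral>\<^sup>+e. ennreal (a e) * (\<integral>\<^sup>+t\<in>{0<..<len e}. ennreal (\<bar>fe e t\<bar> powr p) \<partial>lborel) \<partial>count_space UNIV)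
      \<le> (\<integral>\<^sup>+e. ennreal (edge_mass len a e / 2) * (g (fst (ends e)) + g (snd (ends e))) \<partial>count_space UNIV)"
    unfolding g_def using len a
    by (intro nn_integral_mono edge_integral_le_endpoint_masses[OF f p]) (simp_all add: less_imp_le)
  also have "\<dots> = (\<integral>\<^sup>+v. half_degree ends len a Vm v * ennreal (Vm v) * g v \<partial>count_space UNIV)"
    using Vm by (rule nn_integral_endpoint_masses_eq_half_degree)
  also have "\<dots> \<le> (\<integral>\<^sup>+v. rho_sup ends len a Vm * ennreal (Vm v * \<bar>fv v\<bar> powr p) \<partial>count_space UNIV)"
    unfolding rho_sup_def g_def
    by (intro nn_integral_mono) (simp add: ennreal_mult Vm less_imp_le mult.assoc mult_right_mono SUP_upper)
  also have "\<dots> = rho_sup ends len a Vm * (\<integral>\<^sup>+v. ennreal (Vm v * \<bar>fv v\<bar> powr p) \<partial>count_space UNIV)"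
    by (simp add: nn_integral_cmult)
  finally show ?thesis .
qed

theorem mainTheorem2:
  fixes ends :: "'e \<Rightarrow> 'v \<times> 'v" and len a :: "'e \<Rightarrow> real" and Vm :: "'v \<Rightarrow> real"
    and fv :: "'v \<Rightarrow> real" and fe :: "'e \<Rightarrow> real \<Rightarrow> real" and p :: real
  assumes "metric_graph ends len a Vm"
    and "edgewise_linear ends len fv fe"
    and "p \<ge> 1"
  shows "norm_E len a p fe \<le> enn_root p (rho_sup ends len a Vm) * norm_V Vm p fv"
proof -
  have "p > 0" using \<open>p \<ge> 1\<close> by simp
  have "norm_E len a p fe
      \<le> enn_root p (rho_sup ends len a Vm * (\<integral>\<^sup>+v. ennreal (Vm v * \<bar>fv v\<bar> powr p) \<partial>count_space UNIV))"
    unfolding norm_E_def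
    by (rule enn_root_mono[OF \<open>p > 0\<close> edge_integral_le_rho_sup_vertex_integral[OF assms]])
  also have "\<dots> = enn_root p (rho_sup ends len a Vm) * norm_V Vm p fv"
    unfolding norm_V_def by (rule enn_root_mult[OF \<open>p > 0\<close>])
  finally show ?thesis .
qed

end
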